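(* Let $d, N, M \ge 1$ be integers, $r \in \{0,1,\dots,d\}$, $\sigma \ge 0$, and let $\Lambda \in \mathbb{R}^{d\times d}$ be symmetric positive semidefinite with eigendecomposition $\Lambda = QDQ^\top$, $Q$ orthonormal, $D = \mathrm{diag}([\lambda_1,\dots,\lambda_d])$, $\lambda_1\ge\dots\ge\lambda_d\ge 0$. Let $V^* = \mathrm{diag}([v_1^*,\dots,v_d^*])$ with $v_i^* = \frac{N}{(N+1)\lambda_i + \mathrm{tr}(D)}$ for $i \le r$ and $v_i^* = 0$ for $i>r$, let $c \neq 0$, $U^* = cQV^*Q^\top$, $u = 1/c$, and let $f$ be the linear self-attention model $$f(E) = \left[E + W^{PV} E \cdot \frac{E^\top W^{KQ} E}{M}\right]_{(d+1),(M+1)}, \qquad W^{PV} = \begin{pmatrix} 0_{d\times d} & 0_d \\ 0_d^\top & u\end{pmatrix},\quad W^{KQ} = \begin{pmatrix} U^* & 0_d \\ 0_d^\top & 0\end{pmatrix},$$ applied to an input $E \in \mathbb{R}^{(d+1)\times(M+1)}$ (the output is the bottom-right entry). Fix $w \in \mathbb{R}^d$ and write $w = Q(s+\xi)$ where $s,\xi\in\mathbb{R}^d$ satisfy $s_i = 0$ for all $r < i \le d$ and $\xi_i = 0$ for all $1 \le i \le r$. Let $x_1,\dots,x_M,x_q \overset{\text{i.i.d.}}{\sim}\mathcal{N}(0,\Lambda)$ and independently $\epsilon_1,\dots,\epsilon_M \overset{\text{i.i.d.}}{\sim}\mathcal{N}(0,\sigma^2)$, and let $$\widehat{E} = \begin{pmatrix}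 x_1 & \cdots & x_M & x_q \\ \langle w,x_1\rangle + \epsilon_1 & \cdots & \langle w,x_M\rangle + \epsilon_M & 0\end{pmatrix}.$$ Then $$\mathbb{E}_{x_1,\epsilon_1,\dots,x_M,\epsilon_M,x_q}\left(f(\widehat E) - \langle w, x_q\rangle\right)^2 = \frac1M\|s\|^2_{(V^* )^2D^3} + \frac1M\left(\|s+\xi\|_D^2 + \sigma^2\right)\mathrm{tr}\left((V^* )^2D^2\right) + \|\xi\|_D^2 + \sum_{i\in[r]} s_i^2\lambda_i(\lambda_i v_i^* - 1)^2.$$
   Context: For a positive semidefinite matrix $A$, $\|x\|_A^2 := x^\top A x$. $[r] = \{1,\dots,r\}$. The model $f$ is the optimal rank-$r$ one-layer linear self-attention solution for in-context linear regression with $N$ pretraining examples per prompt; at evaluation the normalization factor equals the number $M$ of in-context examples. *)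

theory Defs
  imports "HOL-Probability.Probability" "Jordan_Normal_Form.Matrix"
begin

definition mat_tr :: "real mat \<Rightarrow> real" where
  "mat_tr A = (\<Sum>i<dim_row A. A $$ (i, i))"

definition qnorm2 :: "real mat \<Rightarrow> real vec \<Rightarrow> real" where
  "qnorm2 A x = scalar_prod x (A *\<^sub>v x)"

definition normal_meas :: "real \<Rightarrow> real measure" where
  "normal_meas v = (if v = 0 then return lborel 0
                    else density lborel (normal_density 0 (sqrt v)))"

text \<open>mu is the law N(0,Lam) of a random vector in R^d (vectors represented as
  functions on {..<d} in the product space), defined by: every linear functional
  <t,x> is distributed as N(0, t^T Lam t).\<close>
definition gaussian_vec :: "nat \<Rightarrow> real mat \<Rightarrow> (nat \<Rightarrow> real) measure \<Rightarrow> bool" where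
  "gaussian_vec d Lam mu \<longleftrightarrow> prob_space mu \<and>
     sets mu = sets (PiM {..<d} (\<lambda>_. lborel)) \<and>
     (\<forall>t::nat \<Rightarrow> real. distr mu lborel (\<lambda>x. \<Sum>i<d. t i * x i)
        = normal_meas (\<Sum>i<d. \<Sum>j<d. t i * Lam $$ (i, j) * t j))"

definition lsa :: "nat \<Rightarrow> nat \<Rightarrow> real mat \<Rightarrow> real mat \<Rightarrow> real mat \<Rightarrow> real" where
  "lsa d M WPV WKQ E =
     (E + (1 / real M) \<cdot>\<^sub>m (WPV * E * (transpose_mat E * WKQ * E))) $$ (d, M)"

definition WPV_mat :: "nat \<Rightarrow> real \<Rightarrow> real mat" where
  "WPV_mat d u = four_block_mat (0\<^sub>m d d) (0\<^sub>m d 1) (0\<^sub>m 1 d) (Matrix.mat 1 1 (\<lambda>_. u))"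

definition WKQ_mat :: "nat \<Rightarrow> real mat \<Rightarrow> real mat" where
  "WKQ_mat d U = four_block_mat U (0\<^sub>m d 1) (0\<^sub>m 1 d) (0\<^sub>m 1 1)"

definition prompt_mat :: "nat \<Rightarrow> nat \<Rightarrow> real vec \<Rightarrow> (nat \<Rightarrow> nat \<Rightarrow> real) \<Rightarrow> (nat \<Rightarrow> real)
     \<Rightarrow> (nat \<Rightarrow> real) \<Rightarrow> real mat" where
  "prompt_mat d M w xs xq es = Matrix.mat (d + 1) (M + 1) (\<lambda>(i, j).
     if i < d then (if j < M then xs j i else xq i)
     else (if j < M then scalar_prod w (vec d (xs j)) + es j else 0))"

text \<open>Optimal diagonal entries v_i^* (0-based index i; paper index i+1).\<close>
definition vstar :: "nat \<Rightarrow> nat \<Rightarrow> nat \<Rightarrow> (nat \<Rightarrow> real) \<Rightarrow> nat \<Rightarrow> real" where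
  "vstar d N r lam i = (if i < r then real N / ((real N + 1) * lam i + (\<Sum>k<d. lam k)) else 0)"

end

(*
  In the eigenbasis Q of Lam write z_m(x) for the coordinates of x, a = s + xi for those of w,
  and y_j = <w, x_j> + eps_j.  For U = c Q V Q^T the model output is
  (1/M) sum_j y_j sum_m v_m z_m(x_j) z_m(x_q), so the prediction error is linear in the query:
  it equals sum_m C_m z_m(x_q) with C_m = (1/M) sum_j y_j v_m z_m(x_j) - a_m.  Averaging over
  x_q gives sum_m lam_m C_m^2; averaging over the noise adds sigma^2 times the squared weights;
  and over the prompt C_m is an empirical mean of M i.i.d. terms, whose mean square is the
  squared bias plus the variance divided by M.  Only two moments of the Gaussian vector enter,
  E[z_m <w,x>] = lam_m a_m and E[(z_m <w,x>)^2] = lam_m ||a||_D^2 + 2 lam_m^2 a_m^2; since a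
  Gaussian vector is only specified through the laws of its linear functionals, they are
  obtained from one-dimensional moments by polarisation.  The resulting risk
    sum_m lam_m ((v_m lam_m - 1)^2 a_m^2 + v_m^2 lam_m (||a||_D^2 + lam_m a_m^2 + sigma^2) / M)
  holds for every diagonal V; splitting the sum at r gives the claimed formula.
*)

theory Submission
  imports Defs
begin

(* Here $ is the vector indexing of Jordan_Normal_Form; with the notation of
   Finite_Cartesian_Product also active, every formula containing $ would be ambiguous. *)
unbundle no vec_syntax

section \<open>Centred Gaussian moments\<close>

lemma sets_normal_meas [measurable_cong]: "sets (normal_meas v) = sets borel"
  by (simp add: normal_meas_def)

lemma prob_space_normal_meas: "0 \<le> v \<Longrightarrow> prob_space (normal_meas v)"
  by (auto simp: normal_meas_def prob_space_return prob_space_normal_density)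

lemma normal_meas_moments:
  fixes v :: real
  assumes "0 \<le> v"
  shows integrable_normal_meas_power: "integrable (normal_meas v) (\<lambda>y. y ^ n)"
    and integral_normal_meas_id: "(\<integral>y. y \<partial>normal_meas v) = 0"
    and integral_normal_meas_sq: "(\<integral>y. y\<^sup>2 \<partial>normal_meas v) = v"
    and integral_normal_meas_4: "(\<integral>y. y ^ 4 \<partial>normal_meas v) = 3 * v\<^sup>2"
proof -
  have "integrable (normal_meas v) (\<lambda>y. y ^ n) \<and> (\<integral>y. y \<partial>normal_meas v) = 0 \<and>
    (\<integral>y. y\<^sup>2 \<partial>normal_meas v) = v \<and> (\<integral>y. y ^ 4 \<partial>normal_meas v) = 3 * v\<^sup>2"
  proof (cases "v = 0")
    case True
    interpret prob_space "return lborel (0::real)"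
      by (simp add: prob_space_return)
    have "integrable (return lborel 0) (\<lambda>y::real. y ^ n)"
      by (rule integrable_const_bound[where B=1]) (auto simp: AE_return power_0_left)
    then show ?thesis
      using True by (simp add: normal_meas_def integral_return)
  next
    case False
    then have s: "0 < sqrt v" using assms by simp
    have "(\<integral>y. normal_density 0 (sqrt v) y * (y - 0) ^ (2 * k) \<partial>lborel)
        = fact (2 * k) / ((2 / (sqrt v)\<^sup>2) ^ k * fact k)" for k
      by (rule integral_normal_moment_even[OF s])
    from this[of 1] this[of 2]
    have "(\<integral>y. normal_density 0 (sqrt v) y * y\<^sup>2 \<partial>lborel) = v"
      and "(\<integral>y. normal_density 0 (sqrt v) y * y ^ 4 \<partial>lborel) = 3 * v\<^sup>2"
      using assms by (simp_all add: fact_numeral power2_eq_square)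
    moreover have "(\<integral>y. normal_density 0 (sqrt v) y * y \<partial>lborel) = 0"
      using integral_normal_moment_odd[OF s, of 0 0] by simp
    moreover have "integrable lborel (\<lambda>y. normal_density 0 (sqrt v) y * y ^ n)"
      using integrable_normal_moment[OF s, of 0 n] by simp
    ultimately show ?thesis
      using False by (simp add: normal_meas_def integrable_density integral_density)
  qed
  then show "integrable (normal_meas v) (\<lambda>y. y ^ n)" "(\<integral>y. y \<partial>normal_meas v) = 0"
    "(\<integral>y. y\<^sup>2 \<partial>normal_meas v) = v" "(\<integral>y. y ^ 4 \<partial>normal_meas v) = 3 * v\<^sup>2"
    by auto
qed

definition lin_form :: "nat \<Rightarrow> (nat \<Rightarrow> real) \<Rightarrow> (nat \<Rightarrow> real) \<Rightarrow> real" where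
  "lin_form d t x = (\<Sum>i<d. t i * x i)"

definition bilin_form :: "nat \<Rightarrow> real mat \<Rightarrow> (nat \<Rightarrow> real) \<Rightarrow> (nat \<Rightarrow> real) \<Rightarrow> real" where
  "bilin_form d A t u = (\<Sum>i<d. \<Sum>j<d. t i * A $$ (i, j) * u j)"

lemma lin_form_add: "lin_form d (\<lambda>i. t i + u i) x = lin_form d t x + lin_form d u x"
  by (simp add: lin_form_def distrib_right sum.distrib)

lemma lin_form_diff: "lin_form d (\<lambda>i. t i - u i) x = lin_form d t x - lin_form d u x"
  by (simp add: lin_form_def left_diff_distrib sum_subtractf)

lemma bilin_form_add_left:
  "bilin_form d A (\<lambda>i. t i + t' i) u = bilin_form d A t u + bilin_form d A t' u"
  by (simp add: bilin_form_def distrib_right sum.distrib)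

lemma bilin_form_add_right:
  "bilin_form d A t (\<lambda>j. u j + u' j) = bilin_form d A t u + bilin_form d A t u'"
  by (simp add: bilin_form_def distrib_left sum.distrib)

lemma bilin_form_diff_left:
  "bilin_form d A (\<lambda>i. t i - t' i) u = bilin_form d A t u - bilin_form d A t' u"
  by (simp add: bilin_form_def left_diff_distrib sum_subtractf)

lemma bilin_form_diff_right:
  "bilin_form d A t (\<lambda>j. u j - u' j) = bilin_form d A t u - bilin_form d A t u'"
  by (simp add: bilin_form_def right_diff_distrib sum_subtractf)

locale centered_gaussian_vec =
  fixes d :: nat and Lam :: "real mat" and mu :: "(nat \<Rightarrow> real) measure"
  assumes gaussian: "gaussian_vec d Lam mu"
    and bilin_form_sym: "\<And>t u. bilin_form d Lam t u = bilin_form d Lam u t"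
    and bilin_form_nonneg: "\<And>t. 0 \<le> bilin_form d Lam t t"
begin

sublocale prob_space mu
  using gaussian by (simp add: gaussian_vec_def)

lemma sets_mu [measurable_cong]: "sets mu = sets (PiM {..<d} (\<lambda>_. lborel))"
  using gaussian by (simp add: gaussian_vec_def)

lemma lin_form_measurable [measurable]: "lin_form d t \<in> borel_measurable mu"
  unfolding lin_form_def by measurable

lemma lin_form_moments:
  shows integrable_lin_form_power: "integrable mu (\<lambda>x. lin_form d t x ^ n)"
    and integral_lin_form_sq: "(\<integral>x. (lin_form d t x)\<^sup>2 \<partial>mu) = bilin_form d Lam t t"
    and integral_lin_form_4: "(\<integral>x. lin_form d t x ^ 4 \<partial>mu) = 3 * (bilin_form d Lam t t)\<^sup>2"
proof -
  have distr: "distr mu lborel (lin_form d t) = normal_meas (bilin_form d Lam t t)"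
    using gaussian by (simp add: gaussian_vec_def lin_form_def[abs_def] bilin_form_def)
  have m: "lin_form d t \<in> mu \<rightarrow>\<^sub>M lborel"
    by simp
  show "integrable mu (\<lambda>x. lin_form d t x ^ n)"
    using integrable_distr_eq[OF m, of "\<lambda>y. y ^ n"] distr
      integrable_normal_meas_power[OF bilin_form_nonneg] by simp
  show "(\<integral>x. (lin_form d t x)\<^sup>2 \<partial>mu) = bilin_form d Lam t t"
    using integral_distr[OF m, of "\<lambda>y. y\<^sup>2"] distr
      integral_normal_meas_sq[OF bilin_form_nonneg] by simp
  show "(\<integral>x. lin_form d t x ^ 4 \<partial>mu) = 3 * (bilin_form d Lam t t)\<^sup>2"
    using integral_distr[OF m, of "\<lambda>y. y ^ 4"] distr
      integral_normal_meas_4[OF bilin_form_nonneg] by simp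
qed

text \<open>The mixed moments follow from the pure ones by polarisation, using
  \<open>4ab = (a + b)\<^sup>2 - (a - b)\<^sup>2\<close> and \<open>12a\<^sup>2b\<^sup>2 = (a + b)\<^sup>4 + (a - b)\<^sup>4 - 2a\<^sup>4 - 2b\<^sup>4\<close>.\<close>

lemma lin_form_mult_moment:
  shows integrable_lin_form_mult: "integrable mu (\<lambda>x. lin_form d t x * lin_form d u x)"
    and integral_lin_form_mult: "(\<integral>x. lin_form d t x * lin_form d u x \<partial>mu) = bilin_form d Lam t u"
proof -
  let ?p = "\<lambda>i. t i + u i" and ?m = "\<lambda>i. t i - u i"
  have eq: "lin_form d t x * lin_form d u x = ((lin_form d ?p x)\<^sup>2 - (lin_form d ?m x)\<^sup>2) / 4" for x
    by (simp add: lin_form_add lin_form_diff power2_eq_square algebra_simps)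
  show "integrable mu (\<lambda>x. lin_form d t x * lin_form d u x)"
    unfolding eq using integrable_lin_form_power[of ?p 2] integrable_lin_form_power[of ?m 2] by simp
  show "(\<integral>x. lin_form d t x * lin_form d u x \<partial>mu) = bilin_form d Lam t u"
    unfolding eq using integrable_lin_form_power[of ?p 2] integrable_lin_form_power[of ?m 2]
    by (simp add: integral_lin_form_sq bilin_form_add_left bilin_form_add_right bilin_form_diff_left
        bilin_form_diff_right bilin_form_sym[of u t])
qed

lemma lin_form_sq_mult_sq_moment:
  shows integrable_lin_form_sq_mult_sq: "integrable mu (\<lambda>x. (lin_form d t x)\<^sup>2 * (lin_form d u x)\<^sup>2)"
    and integral_lin_form_sq_mult_sq: "(\<integral>x. (lin_form d t x)\<^sup>2 * (lin_form d u x)\<^sup>2 \<partial>mu)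
      = bilin_form d Lam t t * bilin_form d Lam u u + 2 * (bilin_form d Lam t u)\<^sup>2"
proof -
  let ?p = "\<lambda>i. t i + u i" and ?m = "\<lambda>i. t i - u i"
  have eq: "(lin_form d t x)\<^sup>2 * (lin_form d u x)\<^sup>2 = (lin_form d ?p x ^ 4 + lin_form d ?m x ^ 4
      - 2 * lin_form d t x ^ 4 - 2 * lin_form d u x ^ 4) / 12" for x
    by (simp add: lin_form_add lin_form_diff power2_eq_square power4_eq_xxxx algebra_simps)
  note integrable = integrable_lin_form_power[of ?p 4] integrable_lin_form_power[of ?m 4]
    integrable_lin_form_power[of t 4] integrable_lin_form_power[of u 4]
  show "integrable mu (\<lambda>x. (lin_form d t x)\<^sup>2 * (lin_form d u x)\<^sup>2)"
    unfolding eq using integrable by simp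
  show "(\<integral>x. (lin_form d t x)\<^sup>2 * (lin_form d u x)\<^sup>2 \<partial>mu)
      = bilin_form d Lam t t * bilin_form d Lam u u + 2 * (bilin_form d Lam t u)\<^sup>2"
    unfolding eq using integrable
    by (simp add: integral_lin_form_4 bilin_form_add_left bilin_form_add_right bilin_form_diff_left
        bilin_form_diff_right bilin_form_sym[of u t] power2_eq_square algebra_simps)
qed

end

section \<open>Coordinates in an eigenbasis of the covariance\<close>

definition eig_coord :: "real mat \<Rightarrow> nat \<Rightarrow> nat \<Rightarrow> (nat \<Rightarrow> real) \<Rightarrow> real" where
  "eig_coord Q d m = lin_form d (\<lambda>k. Q $$ (k, m))"

definition eig_comb :: "real mat \<Rightarrow> nat \<Rightarrow> (nat \<Rightarrow> real) \<Rightarrow> (nat \<Rightarrow> real) \<Rightarrow> real" where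
  "eig_comb Q d a x = (\<Sum>m<d. a m * eig_coord Q d m x)"

definition diag_form :: "nat \<Rightarrow> (nat \<Rightarrow> real) \<Rightarrow> (nat \<Rightarrow> real) \<Rightarrow> (nat \<Rightarrow> real) \<Rightarrow> real" where
  "diag_form d lam a b = (\<Sum>m<d. lam m * a m * b m)"

lemma eig_comb_eq_lin_form: "eig_comb Q d a = lin_form d (\<lambda>k. \<Sum>m<d. Q $$ (k, m) * a m)"
proof
  show "eig_comb Q d a x = lin_form d (\<lambda>k. \<Sum>m<d. Q $$ (k, m) * a m) x" for x
    unfolding eig_comb_def eig_coord_def lin_form_def
    by (simp add: sum_distrib_left sum_distrib_right mult_ac) (rule sum.swap)
qed

lemma eig_comb_indicator: "m < d \<Longrightarrow> eig_comb Q d (indicator {m}) = eig_coord Q d m"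
  by (auto simp: eig_comb_def indicator_def if_distrib cong: if_cong)

lemma diag_form_indicator_right: "m < d \<Longrightarrow> diag_form d lam a (indicator {m}) = lam m * a m"
  by (auto simp: diag_form_def indicator_def if_distrib cong: if_cong)

lemma diag_form_indicator: "m < d \<Longrightarrow> diag_form d lam (indicator {m}) (indicator {m}) = lam m"
  by (auto simp: diag_form_def indicator_def if_distrib cong: if_cong)

lemma index_conj_mat_diag:
  assumes "Q \<in> carrier_mat d d" "k < d" "l < d"
  shows "(Q * mat_diag d lam * transpose_mat Q) $$ (k, l) = (\<Sum>n<d. Q $$ (k, n) * lam n * Q $$ (l, n))"
  using assms by (simp add: scalar_prod_def lessThan_atLeast0 mat_diag_mult_right)

lemma bilin_form_conj_mat_diag:
  assumes "Q \<in> carrier_mat d d"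
  shows "bilin_form d (Q * mat_diag d lam * transpose_mat Q) t u
    = (\<Sum>m<d. lam m * eig_coord Q d m t * eig_coord Q d m u)"
proof -
  have "bilin_form d (Q * mat_diag d lam * transpose_mat Q) t u
      = (\<Sum>k<d. \<Sum>l<d. t k * (\<Sum>m<d. Q $$ (k, m) * lam m * Q $$ (l, m)) * u l)"
    unfolding bilin_form_def
    by (intro sum.cong refl) (simp add: index_conj_mat_diag[OF assms] del: index_mult_mat)
  also have "\<dots> = (\<Sum>k<d. \<Sum>l<d. \<Sum>m<d. lam m * (Q $$ (k, m) * t k) * (Q $$ (l, m) * u l))"
    by (simp add: sum_distrib_left sum_distrib_right mult_ac)
  also have "\<dots> = (\<Sum>k<d. \<Sum>m<d. \<Sum>l<d. lam m * (Q $$ (k, m) * t k) * (Q $$ (l, m) * u l))"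
    by (rule sum.cong[OF refl], rule sum.swap)
  also have "\<dots> = (\<Sum>m<d. \<Sum>k<d. \<Sum>l<d. lam m * (Q $$ (k, m) * t k) * (Q $$ (l, m) * u l))"
    by (rule sum.swap)
  also have "\<dots> = (\<Sum>m<d. lam m * eig_coord Q d m t * eig_coord Q d m u)"
    by (simp add: eig_coord_def lin_form_def sum_distrib_left sum_distrib_right mult_ac)
  finally show ?thesis .
qed

lemma eig_coord_mult_vec:
  assumes "Q \<in> carrier_mat d d" "transpose_mat Q * Q = 1\<^sub>m d" "m < d"
  shows "eig_coord Q d m (\<lambda>k. \<Sum>n<d. Q $$ (k, n) * a n) = a m"
proof -
  have QTQ: "(\<Sum>k<d. Q $$ (k, m) * Q $$ (k, n)) = (if m = n then 1 else 0)" if "n < d" for n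
    using arg_cong[OF assms(2), of "\<lambda>A. A $$ (m, n)"] assms(1,3) that
    by (simp add: scalar_prod_def lessThan_atLeast0)
  have "eig_coord Q d m (\<lambda>k. \<Sum>n<d. Q $$ (k, n) * a n) = (\<Sum>n<d. (\<Sum>k<d. Q $$ (k, m) * Q $$ (k, n)) * a n)"
    unfolding eig_coord_def lin_form_def
    by (simp add: sum_distrib_left sum_distrib_right mult_ac) (rule sum.swap)
  also have "\<dots> = (\<Sum>n<d. (if m = n then a n else 0))"
    by (intro sum.cong refl) (simp add: QTQ)
  also have "\<dots> = a m"
    using assms(3) by simp
  finally show ?thesis .
qed

lemma bilin_form_eig_comb:
  assumes "Q \<in> carrier_mat d d" "transpose_mat Q * Q = 1\<^sub>m d"
  shows "bilin_form d (Q * mat_diag d lam * transpose_mat Q)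
      (\<lambda>k. \<Sum>n<d. Q $$ (k, n) * a n) (\<lambda>k. \<Sum>n<d. Q $$ (k, n) * b n) = diag_form d lam a b"
  using assms by (simp add: bilin_form_conj_mat_diag eig_coord_mult_vec diag_form_def)

locale eigen_gaussian_vec =
  fixes d :: nat and Q Lam :: "real mat" and lam :: "nat \<Rightarrow> real" and mu :: "(nat \<Rightarrow> real) measure"
  assumes Q_carrier: "Q \<in> carrier_mat d d"
    and Q_orthogonal: "transpose_mat Q * Q = 1\<^sub>m d"
    and Lam_eq: "Lam = Q * mat_diag d lam * transpose_mat Q"
    and lam_nonneg: "\<And>m. m < d \<Longrightarrow> 0 \<le> lam m"
    and gaussian_mu: "gaussian_vec d Lam mu"
begin

sublocale centered_gaussian_vec d Lam mu
proof
  show "bilin_form d Lam t u = bilin_form d Lam u t" for t u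
    by (simp add: Lam_eq bilin_form_conj_mat_diag[OF Q_carrier] mult_ac)
  show "0 \<le> bilin_form d Lam t t" for t
    unfolding Lam_eq bilin_form_conj_mat_diag[OF Q_carrier]
    by (intro sum_nonneg) (simp add: lam_nonneg mult.assoc mult_nonneg_nonneg)
qed (fact gaussian_mu)

lemma eig_comb_measurable [measurable]: "eig_comb Q d a \<in> borel_measurable mu"
  by (simp add: eig_comb_eq_lin_form)

lemma eig_coord_measurable [measurable]: "eig_coord Q d m \<in> borel_measurable mu"
  by (simp add: eig_coord_def)

lemma eig_comb_moments:
  shows integrable_eig_comb_power: "integrable mu (\<lambda>x. eig_comb Q d a x ^ n)"
    and integral_eig_comb_sq: "(\<integral>x. (eig_comb Q d a x)\<^sup>2 \<partial>mu) = diag_form d lam a a"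
    and integrable_eig_comb_mult: "integrable mu (\<lambda>x. eig_comb Q d a x * eig_comb Q d b x)"
    and integral_eig_comb_mult: "(\<integral>x. eig_comb Q d a x * eig_comb Q d b x \<partial>mu) = diag_form d lam a b"
    and integrable_eig_comb_sq_mult_sq:
      "integrable mu (\<lambda>x. (eig_comb Q d a x)\<^sup>2 * (eig_comb Q d b x)\<^sup>2)"
    and integral_eig_comb_sq_mult_sq: "(\<integral>x. (eig_comb Q d a x)\<^sup>2 * (eig_comb Q d b x)\<^sup>2 \<partial>mu)
      = diag_form d lam a a * diag_form d lam b b + 2 * (diag_form d lam a b)\<^sup>2"
  using lin_form_moments lin_form_mult_moment lin_form_sq_mult_sq_moment
  by (simp_all add: eig_comb_eq_lin_form Lam_eq bilin_form_eig_comb[OF Q_carrier Q_orthogonal])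

end

section \<open>Integrals over products of probability spaces\<close>

lemma PiM_component_integral:
  fixes G :: "'a \<Rightarrow> real"
  assumes "prob_space P" "i \<in> J" "G \<in> borel_measurable P"
  shows integrable_PiM_component_iff: "integrable (PiM J (\<lambda>_. P)) (\<lambda>\<omega>. G (\<omega> i)) \<longleftrightarrow> integrable P G"
    and integral_PiM_component: "(\<integral>\<omega>. G (\<omega> i) \<partial>PiM J (\<lambda>_. P)) = integral\<^sup>L P G"
proof -
  have distr: "distr (PiM J (\<lambda>_. P)) P (\<lambda>\<omega>. \<omega> i) = P"
    using assms(1,2) by (rule distr_PiM_component)
  have m: "(\<lambda>\<omega>. \<omega> i) \<in> PiM J (\<lambda>_. P) \<rightarrow>\<^sub>M P"
    using assms(2) by simp
  show "integrable (PiM J (\<lambda>_. P)) (\<lambda>\<omega>. G (\<omega> i)) \<longleftrightarrow> integrable P G"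
    using integrable_distr_eq[OF m assms(3)] distr by simp
  show "(\<integral>\<omega>. G (\<omega> i) \<partial>PiM J (\<lambda>_. P)) = integral\<^sup>L P G"
    using integral_distr[OF m assms(3)] distr by simp
qed

lemma PiM_components_mult_integral:
  fixes G H :: "'a \<Rightarrow> real"
  assumes P: "prob_space P" and J: "finite J" "i \<in> J" "j \<in> J" "i \<noteq> j"
    and G: "integrable P G" and H: "integrable P H"
  shows integrable_PiM_components_mult: "integrable (PiM J (\<lambda>_. P)) (\<lambda>\<omega>. G (\<omega> i) * H (\<omega> j))"
    and integral_PiM_components_mult:
      "(\<integral>\<omega>. G (\<omega> i) * H (\<omega> j) \<partial>PiM J (\<lambda>_. P)) = integral\<^sup>L P G * integral\<^sup>L P H"
proof -
  interpret prob_space P by fact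
  interpret product_prob_space "\<lambda>_. P" J ..
  define F where "F k = (if k = i then G else if k = j then H else (\<lambda>_. 1))" for k
  have F: "integrable P (F k)" for k
    using G H by (simp add: F_def)
  have prod_F: "(\<Prod>k\<in>J. f k) = f i * (f j :: real)" if "\<And>k. k \<in> J \<Longrightarrow> k \<noteq> i \<Longrightarrow> k \<noteq> j \<Longrightarrow> f k = 1"
    for f
  proof -
    have "(\<Prod>k\<in>J. f k) = (\<Prod>k\<in>{i, j}. f k)"
      using J that by (intro prod.mono_neutral_right) auto
    then show ?thesis
      using J by simp
  qed
  have eq: "(\<Prod>k\<in>J. F k (\<omega> k)) = G (\<omega> i) * H (\<omega> j)" for \<omega>
    using J by (subst prod_F) (auto simp: F_def)
  show "integrable (PiM J (\<lambda>_. P)) (\<lambda>\<omega>. G (\<omega> i) * H (\<omega> j))"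
    using product_integrable_prod[of J F] J(1) F by (simp add: eq)
  have "(\<Prod>k\<in>J. integral\<^sup>L P (F k)) = integral\<^sup>L P G * integral\<^sup>L P H"
    using J prob_space.prob_space[OF assms(1)] by (subst prod_F) (auto simp: F_def)
  then show "(\<integral>\<omega>. G (\<omega> i) * H (\<omega> j) \<partial>PiM J (\<lambda>_. P)) = integral\<^sup>L P G * integral\<^sup>L P H"
    using product_integral_prod[of J F] J(1) F by (simp add: eq)
qed

lemma PiM_sum_sq_integral:
  fixes H :: "nat \<Rightarrow> 'a \<Rightarrow> real"
  assumes P: "prob_space P" and J: "finite J"
    and H: "\<And>j. j \<in> J \<Longrightarrow> H j \<in> borel_measurable P"
    and H2: "\<And>j. j \<in> J \<Longrightarrow> integrable P (\<lambda>x. (H j x)\<^sup>2)"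
  shows integrable_PiM_sum_sq: "integrable (PiM J (\<lambda>_. P)) (\<lambda>\<omega>. (\<Sum>j\<in>J. H j (\<omega> j))\<^sup>2)"
    and integral_PiM_sum_sq: "(\<integral>\<omega>. (\<Sum>j\<in>J. H j (\<omega> j))\<^sup>2 \<partial>PiM J (\<lambda>_. P))
      = (\<Sum>j\<in>J. integral\<^sup>L P (H j))\<^sup>2 + (\<Sum>j\<in>J. (\<integral>x. (H j x)\<^sup>2 \<partial>P) - (integral\<^sup>L P (H j))\<^sup>2)"
proof -
  interpret prob_space P by fact
  have H1: "integrable P (H j)" if "j \<in> J" for j
    using square_integrable_imp_integrable H H2 that by blast
  have entry: "integrable (PiM J (\<lambda>_. P)) (\<lambda>\<omega>. H i (\<omega> i) * H j (\<omega> j)) \<and>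
      (\<integral>\<omega>. H i (\<omega> i) * H j (\<omega> j) \<partial>PiM J (\<lambda>_. P)) =
        (if i = j then \<integral>x. (H i x)\<^sup>2 \<partial>P else integral\<^sup>L P (H i) * integral\<^sup>L P (H j))"
    if "i \<in> J" "j \<in> J" for i j
  proof (cases "i = j")
    case True
    have "(\<lambda>x. (H i x)\<^sup>2) \<in> borel_measurable P"
      using H[OF that(1)] by measurable
    from PiM_component_integral[OF P that(1) this] show ?thesis
      using True H2[OF that(1)] by (simp add: power2_eq_square)
  next
    case False
    then show ?thesis
      using PiM_components_mult_integral[OF P J that False H1[OF that(1)] H1[OF that(2)]] by simp
  qed
  have sq: "(\<Sum>j\<in>J. H j (\<omega> j))\<^sup>2 = (\<Sum>i\<in>J. \<Sum>j\<in>J. H i (\<omega> i) * H j (\<omega> j))" for \<omega>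
    by (simp add: power2_eq_square sum_product)
  show "integrable (PiM J (\<lambda>_. P)) (\<lambda>\<omega>. (\<Sum>j\<in>J. H j (\<omega> j))\<^sup>2)"
    unfolding sq using entry by (intro Bochner_Integration.integrable_sum) auto
  have "(\<integral>\<omega>. (\<Sum>j\<in>J. H j (\<omega> j))\<^sup>2 \<partial>PiM J (\<lambda>_. P))
      = (\<Sum>i\<in>J. \<Sum>j\<in>J. if i = j then \<integral>x. (H i x)\<^sup>2 \<partial>P else integral\<^sup>L P (H i) * integral\<^sup>L P (H j))"
    unfolding sq using entry by (simp add: Bochner_Integration.integral_sum Bochner_Integration.integrable_sum)
  also have "\<dots> = (\<Sum>i\<in>J. \<Sum>j\<in>J. integral\<^sup>L P (H i) * integral\<^sup>L P (H j)
      + (if i = j then (\<integral>x. (H i x)\<^sup>2 \<partial>P) - (integral\<^sup>L P (H i))\<^sup>2 else 0))"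
    by (intro sum.cong refl) (simp add: power2_eq_square)
  also have "\<dots> = (\<Sum>j\<in>J. integral\<^sup>L P (H j))\<^sup>2 + (\<Sum>j\<in>J. (\<integral>x. (H j x)\<^sup>2 \<partial>P) - (integral\<^sup>L P (H j))\<^sup>2)"
    using J by (simp add: sum.distrib power2_eq_square sum_product)
  finally show "(\<integral>\<omega>. (\<Sum>j\<in>J. H j (\<omega> j))\<^sup>2 \<partial>PiM J (\<lambda>_. P))
      = (\<Sum>j\<in>J. integral\<^sup>L P (H j))\<^sup>2 + (\<Sum>j\<in>J. (\<integral>x. (H j x)\<^sup>2 \<partial>P) - (integral\<^sup>L P (H j))\<^sup>2)" .
qed

lemma PiM_sample_mean_sq_integral:
  fixes h :: "'a \<Rightarrow> real"
  assumes P: "prob_space P" and M: "0 < M"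
    and h[measurable]: "h \<in> borel_measurable P" and h2: "integrable P (\<lambda>x. (h x)\<^sup>2)"
  shows integrable_PiM_sample_mean_sq:
      "integrable (PiM {..<M} (\<lambda>_. P)) (\<lambda>\<omega>. ((1 / real M) * (\<Sum>j<M. h (\<omega> j)) - A)\<^sup>2)"
    and integral_PiM_sample_mean_sq:
      "(\<integral>\<omega>. ((1 / real M) * (\<Sum>j<M. h (\<omega> j)) - A)\<^sup>2 \<partial>PiM {..<M} (\<lambda>_. P))
      = (integral\<^sup>L P h - A)\<^sup>2 + ((\<integral>x. (h x)\<^sup>2 \<partial>P) - (integral\<^sup>L P h)\<^sup>2) / real M"
proof -
  interpret prob_space P by fact
  define K where "K x = (h x - A) / real M" for x
  have h1: "integrable P h"
    using square_integrable_imp_integrable h h2 by blast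
  have sum_K: "(1 / real M) * (\<Sum>j<M. h (\<omega> j)) - A = (\<Sum>j<M. K (\<omega> j))" for \<omega>
    using M by (simp add: K_def sum_divide_distrib[symmetric] sum_subtractf field_simps)
  have K_sq: "(K x)\<^sup>2 = ((h x)\<^sup>2 - 2 * A * h x + A\<^sup>2) / (real M)\<^sup>2" for x
    by (simp add: K_def power_divide power2_diff)
  have K_measurable: "K \<in> borel_measurable P"
    unfolding K_def by measurable
  have K_sq_integrable: "integrable P (\<lambda>x. (K x)\<^sup>2)"
    unfolding K_sq using h1 h2 by simp
  note K = K_measurable K_sq_integrable
  have K_mean: "integral\<^sup>L P K = (integral\<^sup>L P h - A) / real M"
    unfolding K_def[abs_def] using h1 by (simp add: prob_space)
  have K_second_moment:
    "(\<integral>x. (K x)\<^sup>2 \<partial>P) = ((\<integral>x. (h x)\<^sup>2 \<partial>P) - 2 * A * integral\<^sup>L P h + A\<^sup>2) / (real M)\<^sup>2"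
    unfolding K_sq using h1 h2 by (simp add: prob_space)
  have mean: "(\<Sum>j<M. integral\<^sup>L P K)\<^sup>2 = (integral\<^sup>L P h - A)\<^sup>2"
    using M by (simp add: K_mean)
  have "(\<integral>x. (K x)\<^sup>2 \<partial>P) - (integral\<^sup>L P K)\<^sup>2
      = ((\<integral>x. (h x)\<^sup>2 \<partial>P) - (integral\<^sup>L P h)\<^sup>2) / (real M)\<^sup>2"
    unfolding K_mean K_second_moment power_divide by (simp add: diff_divide_distrib[symmetric] power2_diff)
  then have variance: "(\<Sum>j<M. (\<integral>x. (K x)\<^sup>2 \<partial>P) - (integral\<^sup>L P K)\<^sup>2)
      = ((\<integral>x. (h x)\<^sup>2 \<partial>P) - (integral\<^sup>L P h)\<^sup>2) / real M"
    by (simp add: power2_eq_square)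
  show "(\<integral>\<omega>. ((1 / real M) * (\<Sum>j<M. h (\<omega> j)) - A)\<^sup>2 \<partial>PiM {..<M} (\<lambda>_. P))
      = (integral\<^sup>L P h - A)\<^sup>2 + ((\<integral>x. (h x)\<^sup>2 \<partial>P) - (integral\<^sup>L P h)\<^sup>2) / real M"
    unfolding sum_K mean[symmetric] variance[symmetric]
    using integral_PiM_sum_sq[OF P, of "{..<M}" "\<lambda>_. K"] K by simp
  show "integrable (PiM {..<M} (\<lambda>_. P)) (\<lambda>\<omega>. ((1 / real M) * (\<Sum>j<M. h (\<omega> j)) - A)\<^sup>2)"
    unfolding sum_K using integrable_PiM_sum_sq[OF P, of "{..<M}" "\<lambda>_. K"] K by simp
qed

lemma normal_meas_affine_moments:
  fixes v :: real
  assumes "0 \<le> v"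
  shows integrable_normal_meas_affine_sq: "integrable (normal_meas v) (\<lambda>e. (b + c * e)\<^sup>2)"
    and integral_normal_meas_affine: "(\<integral>e. b + c * e \<partial>normal_meas v) = b"
    and integral_normal_meas_affine_sq: "(\<integral>e. (b + c * e)\<^sup>2 \<partial>normal_meas v) = b\<^sup>2 + c\<^sup>2 * v"
proof -
  interpret prob_space "normal_meas v"
    using assms by (rule prob_space_normal_meas)
  have id: "integrable (normal_meas v) (\<lambda>e. e)" and sq: "integrable (normal_meas v) (\<lambda>e. e\<^sup>2)"
    using integrable_normal_meas_power[OF assms, of 1] integrable_normal_meas_power[OF assms, of 2] by simp_all
  have expand: "(b + c * e)\<^sup>2 = b\<^sup>2 + (2 * b * c) * e + c\<^sup>2 * e\<^sup>2" for e
    by (simp add: power2_eq_square algebra_simps)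
  show "integrable (normal_meas v) (\<lambda>e. (b + c * e)\<^sup>2)"
    unfolding expand using id sq by simp
  show "(\<integral>e. b + c * e \<partial>normal_meas v) = b"
    using id integral_normal_meas_id[OF assms] by (simp add: prob_space)
  show "(\<integral>e. (b + c * e)\<^sup>2 \<partial>normal_meas v) = b\<^sup>2 + c\<^sup>2 * v"
    unfolding expand using id sq integral_normal_meas_id[OF assms] integral_normal_meas_sq[OF assms]
    by (simp add: prob_space)
qed

lemma noisy_average_sq_integral:
  fixes \<alpha> \<beta> :: "nat \<Rightarrow> real"
  assumes v: "0 \<le> v" and M: "0 < M"
  shows integrable_noisy_average_sq: "integrable (PiM {..<M} (\<lambda>_. normal_meas v))
      (\<lambda>e. (1 / real M * (\<Sum>j<M. (\<alpha> j + e j) * \<beta> j) - A)\<^sup>2)"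
    and integral_noisy_average_sq: "(\<integral>e. (1 / real M * (\<Sum>j<M. (\<alpha> j + e j) * \<beta> j) - A)\<^sup>2
        \<partial>PiM {..<M} (\<lambda>_. normal_meas v))
      = (1 / real M * (\<Sum>j<M. \<alpha> j * \<beta> j) - A)\<^sup>2 + v * (\<Sum>j<M. (\<beta> j / real M)\<^sup>2)"
proof -
  define H where "H j = (\<lambda>e. (\<alpha> j * \<beta> j - A) / real M + \<beta> j / real M * e)" for j
  have sum_H: "1 / real M * (\<Sum>j<M. (\<alpha> j + e j) * \<beta> j) - A = (\<Sum>j<M. H j (e j))" for e
    using M by (simp add: H_def sum.distrib sum_divide_distrib[symmetric] sum_subtractf field_simps)
  have H_measurable: "H j \<in> borel_measurable (normal_meas v)" for j
    unfolding H_def by measurable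
  have H_sq: "integrable (normal_meas v) (\<lambda>e. (H j e)\<^sup>2)" for j
    unfolding H_def by (rule integrable_normal_meas_affine_sq[OF v])
  have mean: "integral\<^sup>L (normal_meas v) (H j) = (\<alpha> j * \<beta> j - A) / real M" for j
    unfolding H_def by (rule integral_normal_meas_affine[OF v])
  have second_moment: "(\<integral>e. (H j e)\<^sup>2 \<partial>normal_meas v) = ((\<alpha> j * \<beta> j - A) / real M)\<^sup>2 + (\<beta> j / real M)\<^sup>2 * v"
    for j unfolding H_def by (rule integral_normal_meas_affine_sq[OF v])
  note sum_sq = PiM_sum_sq_integral[of "normal_meas v" "{..<M}" H,
      OF prob_space_normal_meas[OF v] finite_lessThan H_measurable H_sq]
  show "integrable (PiM {..<M} (\<lambda>_. normal_meas v)) (\<lambda>e. (1 / real M * (\<Sum>j<M. (\<alpha> j + e j) * \<beta> j) - A)\<^sup>2)"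
    unfolding sum_H by (rule sum_sq(1))
  have "(\<Sum>j<M. (\<alpha> j * \<beta> j - A) / real M) = 1 / real M * (\<Sum>j<M. \<alpha> j * \<beta> j) - A"
    using M by (simp add: sum_divide_distrib[symmetric] sum_subtractf field_simps)
  then show "(\<integral>e. (1 / real M * (\<Sum>j<M. (\<alpha> j + e j) * \<beta> j) - A)\<^sup>2 \<partial>PiM {..<M} (\<lambda>_. normal_meas v))
      = (1 / real M * (\<Sum>j<M. \<alpha> j * \<beta> j) - A)\<^sup>2 + v * (\<Sum>j<M. (\<beta> j / real M)\<^sup>2)"
    unfolding sum_H sum_sq(2) mean second_moment by (simp add: sum_distrib_left mult.commute)
qed

lemma integral_triple_nonneg_iterated:
  fixes g :: "'a \<times> 'b \<times> 'c \<Rightarrow> real"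
  assumes "sigma_finite_measure A" "sigma_finite_measure B" "sigma_finite_measure C"
    and g[measurable]: "g \<in> borel_measurable (A \<Otimes>\<^sub>M B \<Otimes>\<^sub>M C)" and nonneg: "\<And>\<omega>. 0 \<le> g \<omega>"
    and integrable_B: "\<And>x z. integrable B (\<lambda>y. g (x, y, z))"
    and integrable_C: "\<And>x. integrable C (\<lambda>z. \<integral>y. g (x, y, z) \<partial>B)"
    and integrable_A: "integrable A (\<lambda>x. \<integral>z. \<integral>y. g (x, y, z) \<partial>B \<partial>C)"
  shows "integral\<^sup>L (A \<Otimes>\<^sub>M B \<Otimes>\<^sub>M C) g = (\<integral>x. \<integral>z. \<integral>y. g (x, y, z) \<partial>B \<partial>C \<partial>A)"
proof -
  interpret B: sigma_finite_measure B by fact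
  interpret C: sigma_finite_measure C by fact
  interpret BC: pair_sigma_finite B C ..
  have inner: "(\<integral>\<^sup>+ p. g (x, p) \<partial>(B \<Otimes>\<^sub>M C)) = ennreal (\<integral>z. \<integral>y. g (x, y, z) \<partial>B \<partial>C)"
    if "x \<in> space A" for x
  proof -
    have "(\<lambda>p. ennreal (g (x, p))) \<in> borel_measurable (B \<Otimes>\<^sub>M C)"
      using that by measurable
    from BC.nn_integral_snd[OF this]
    have "(\<integral>\<^sup>+ p. g (x, p) \<partial>(B \<Otimes>\<^sub>M C)) = (\<integral>\<^sup>+ z. \<integral>\<^sup>+ y. g (x, y, z) \<partial>B \<partial>C)"
      by simp
    also have "\<dots> = (\<integral>\<^sup>+ z. ennreal (\<integral>y. g (x, y, z) \<partial>B) \<partial>C)"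
      by (intro nn_integral_cong nn_integral_eq_integral integrable_B) (simp add: nonneg)
    also have "\<dots> = ennreal (\<integral>z. \<integral>y. g (x, y, z) \<partial>B \<partial>C)"
      by (intro nn_integral_eq_integral integrable_C AE_I2 integral_nonneg) (simp add: nonneg)
    finally show ?thesis .
  qed
  have "(\<integral>\<^sup>+ \<omega>. g \<omega> \<partial>(A \<Otimes>\<^sub>M B \<Otimes>\<^sub>M C)) = (\<integral>\<^sup>+ x. \<integral>\<^sup>+ p. g (x, p) \<partial>(B \<Otimes>\<^sub>M C) \<partial>A)"
    by (rule sigma_finite_measure.nn_integral_fst[symmetric, OF BC.sigma_finite_measure_axioms]) measurable
  also have "\<dots> = (\<integral>\<^sup>+ x. ennreal (\<integral>z. \<integral>y. g (x, y, z) \<partial>B \<partial>C) \<partial>A)"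
    by (intro nn_integral_cong) (simp add: inner)
  also have "\<dots> = ennreal (\<integral>x. \<integral>z. \<integral>y. g (x, y, z) \<partial>B \<partial>C \<partial>A)"
    by (intro nn_integral_eq_integral integrable_A AE_I2 integral_nonneg) (simp add: nonneg)
  finally show ?thesis
    using nonneg by (simp add: integral_eq_nn_integral integral_nonneg)
qed

section \<open>Averaging over the prompt\<close>

context eigen_gaussian_vec
begin

lemma prompt_signal_sq_integral:
  assumes m: "m < d" and M: "0 < M"
  shows integrable_prompt_signal_sq: "integrable (PiM {..<M} (\<lambda>_. mu))
      (\<lambda>xs. (1 / real M * (\<Sum>j<M. eig_comb Q d a (xs j) * vm * eig_coord Q d m (xs j)) - a m)\<^sup>2)"
    and integral_prompt_signal_sq: "(\<integral>xs. (1 / real M * (\<Sum>j<M. eig_comb Q d a (xs j) * vm * eig_coord Q d m (xs j))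
        - a m)\<^sup>2 \<partial>PiM {..<M} (\<lambda>_. mu))
      = (vm * lam m - 1)\<^sup>2 * (a m)\<^sup>2 + vm\<^sup>2 * lam m * (diag_form d lam a a + lam m * (a m)\<^sup>2) / real M"
proof -
  let ?e = "indicator {m} :: nat \<Rightarrow> real"
  define h where "h x = vm * (eig_comb Q d a x * eig_comb Q d ?e x)" for x
  have h_eq: "eig_comb Q d a x * vm * eig_coord Q d m x = h x" for x
    by (simp add: h_def eig_comb_indicator[OF m])
  have h_sq: "(h x)\<^sup>2 = vm\<^sup>2 * ((eig_comb Q d a x)\<^sup>2 * (eig_comb Q d ?e x)\<^sup>2)" for x
    by (simp add: h_def power_mult_distrib)
  have h_measurable: "h \<in> borel_measurable mu"
    unfolding h_def by measurable
  have h_sq_integrable: "integrable mu (\<lambda>x. (h x)\<^sup>2)"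
    unfolding h_sq using integrable_eig_comb_sq_mult_sq by simp
  note h = h_measurable h_sq_integrable
  have mean: "integral\<^sup>L mu h = vm * (lam m * a m)"
    unfolding h_def[abs_def] using integral_eig_comb_mult[of a ?e] integrable_eig_comb_mult[of a ?e]
    by (simp add: diag_form_indicator_right[OF m])
  have second_moment: "(\<integral>x. (h x)\<^sup>2 \<partial>mu) = vm\<^sup>2 * (diag_form d lam a a * lam m + 2 * (lam m * a m)\<^sup>2)"
    unfolding h_sq using integral_eig_comb_sq_mult_sq[of a ?e] integrable_eig_comb_sq_mult_sq[of a ?e]
    by (simp add: diag_form_indicator_right[OF m] diag_form_indicator[OF m])
  have "(\<integral>xs. (1 / real M * (\<Sum>j<M. eig_comb Q d a (xs j) * vm * eig_coord Q d m (xs j))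
        - a m)\<^sup>2 \<partial>PiM {..<M} (\<lambda>_. mu))
      = (integral\<^sup>L mu h - a m)\<^sup>2 + ((\<integral>x. (h x)\<^sup>2 \<partial>mu) - (integral\<^sup>L mu h)\<^sup>2) / real M"
    unfolding h_eq by (rule integral_PiM_sample_mean_sq[OF prob_space_axioms M h])
  also have "\<dots> = (vm * lam m - 1)\<^sup>2 * (a m)\<^sup>2 + vm\<^sup>2 * lam m * (diag_form d lam a a + lam m * (a m)\<^sup>2) / real M"
    unfolding mean second_moment using M by (simp add: field_simps power2_eq_square)
  finally show "(\<integral>xs. (1 / real M * (\<Sum>j<M. eig_comb Q d a (xs j) * vm * eig_coord Q d m (xs j))
        - a m)\<^sup>2 \<partial>PiM {..<M} (\<lambda>_. mu))
      = (vm * lam m - 1)\<^sup>2 * (a m)\<^sup>2 + vm\<^sup>2 * lam m * (diag_form d lam a a + lam m * (a m)\<^sup>2) / real M" .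
  show "integrable (PiM {..<M} (\<lambda>_. mu))
      (\<lambda>xs. (1 / real M * (\<Sum>j<M. eig_comb Q d a (xs j) * vm * eig_coord Q d m (xs j)) - a m)\<^sup>2)"
    unfolding h_eq using integrable_PiM_sample_mean_sq[OF prob_space_axioms M h] .
qed

lemma prompt_noise_integral:
  assumes m: "m < d"
  shows integrable_prompt_noise:
      "integrable (PiM {..<M} (\<lambda>_. mu)) (\<lambda>xs. \<Sum>j<M. (vm * eig_coord Q d m (xs j) / real M)\<^sup>2)"
    and integral_prompt_noise:
      "(\<integral>xs. (\<Sum>j<M. (vm * eig_coord Q d m (xs j) / real M)\<^sup>2) \<partial>PiM {..<M} (\<lambda>_. mu))
        = vm\<^sup>2 * lam m / real M"
proof -
  define G where "G x = (vm / real M)\<^sup>2 * (eig_comb Q d (indicator {m}) x)\<^sup>2" for x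
  have G_eq: "(vm * eig_coord Q d m x / real M)\<^sup>2 = G x" for x
    by (simp add: G_def eig_comb_indicator[OF m] power_mult_distrib power_divide)
  have G: "G \<in> borel_measurable mu" "integrable mu G" "integral\<^sup>L mu G = (vm / real M)\<^sup>2 * lam m"
    unfolding G_def[abs_def] using integrable_eig_comb_power[of "indicator {m}" 2]
    by (simp_all add: integral_eig_comb_sq diag_form_indicator[OF m])
  have component: "integrable (PiM {..<M} (\<lambda>_. mu)) (\<lambda>xs. G (xs j))"
      "(\<integral>xs. G (xs j) \<partial>PiM {..<M} (\<lambda>_. mu)) = (vm / real M)\<^sup>2 * lam m" if "j \<in> {..<M}" for j
    using PiM_component_integral[OF prob_space_axioms that G(1)] G(2,3) by simp_all
  show "integrable (PiM {..<M} (\<lambda>_. mu)) (\<lambda>xs. \<Sum>j<M. (vm * eig_coord Q d m (xs j) / real M)\<^sup>2)"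
    unfolding G_eq using component by (intro Bochner_Integration.integrable_sum) auto
  show "(\<integral>xs. (\<Sum>j<M. (vm * eig_coord Q d m (xs j) / real M)\<^sup>2) \<partial>PiM {..<M} (\<lambda>_. mu))
      = vm\<^sup>2 * lam m / real M"
    unfolding G_eq using component
    by (simp add: Bochner_Integration.integral_sum power_divide power2_eq_square)
qed

end

section \<open>The linear self-attention model\<close>

lemma index_mult_mat_sum:
  assumes "A \<in> carrier_mat n m" "B \<in> carrier_mat m p" "i < n" "j < p"
  shows "(A * B) $$ (i, j) = (\<Sum>k<m. A $$ (i, k) * B $$ (k, j))"
  using assms by (simp add: scalar_prod_def lessThan_atLeast0)

lemma WPV_mat_carrier: "WPV_mat d u \<in> carrier_mat (d + 1) (d + 1)"
  unfolding WPV_mat_def by (rule four_block_carrier_mat) auto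

lemma WKQ_mat_carrier: "U \<in> carrier_mat d d \<Longrightarrow> WKQ_mat d U \<in> carrier_mat (d + 1) (d + 1)"
  unfolding WKQ_mat_def by (rule four_block_carrier_mat) auto

lemma index_WPV_mat:
  "i < d + 1 \<Longrightarrow> j < d + 1 \<Longrightarrow> WPV_mat d u $$ (i, j) = (if i = d \<and> j = d then u else 0)"
  unfolding WPV_mat_def by (auto simp: index_mat_four_block)

lemma index_WKQ_mat:
  "U \<in> carrier_mat d d \<Longrightarrow> i < d + 1 \<Longrightarrow> j < d + 1 \<Longrightarrow>
    WKQ_mat d U $$ (i, j) = (if i < d \<and> j < d then U $$ (i, j) else 0)"
  unfolding WKQ_mat_def by (auto simp: index_mat_four_block)

lemma lsa_eq_bilin_form:
  assumes E: "E \<in> carrier_mat (d + 1) (M + 1)" and U: "U \<in> carrier_mat d d"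
  shows "lsa d M (WPV_mat d u) (WKQ_mat d U) E = E $$ (d, M) + u / real M *
    (\<Sum>j<M + 1. E $$ (d, j) * bilin_form d U (\<lambda>k. E $$ (k, j)) (\<lambda>k. E $$ (k, M)))"
proof -
  let ?P = "WPV_mat d u" and ?K = "WKQ_mat d U"
  have P: "?P \<in> carrier_mat (d + 1) (d + 1)" and K: "?K \<in> carrier_mat (d + 1) (d + 1)"
    using WPV_mat_carrier WKQ_mat_carrier[OF U] .
  have ET: "transpose_mat E \<in> carrier_mat (M + 1) (d + 1)"
    using E by simp
  have PE: "(?P * E) $$ (d, j) = u * E $$ (d, j)" if "j < M + 1" for j
    using that by (simp add: index_mult_mat_sum[OF P E] index_WPV_mat if_distrib cong: if_cong)
  have EKE: "(transpose_mat E * ?K * E) $$ (j, M) = bilin_form d U (\<lambda>k. E $$ (k, j)) (\<lambda>k. E $$ (k, M))"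
    if "j < M + 1" for j
  proof -
    have EK: "transpose_mat E * ?K \<in> carrier_mat (M + 1) (d + 1)"
      using ET K by simp
    have "(transpose_mat E * ?K * E) $$ (j, M) = (\<Sum>l<d + 1. (transpose_mat E * ?K) $$ (j, l) * E $$ (l, M))"
      using that by (simp only: index_mult_mat_sum[OF EK E])
    also have "\<dots> = (\<Sum>l<d + 1. (\<Sum>k<d + 1. E $$ (k, j) * ?K $$ (k, l)) * E $$ (l, M))"
      using E that by (intro sum.cong refl) (simp add: index_mult_mat_sum[OF ET K])
    also have "\<dots> = (\<Sum>l<d. (\<Sum>k<d. E $$ (k, j) * U $$ (k, l)) * E $$ (l, M))"
      using U by (simp add: index_WKQ_mat)
    also have "\<dots> = bilin_form d U (\<lambda>k. E $$ (k, j)) (\<lambda>k. E $$ (k, M))"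
      unfolding bilin_form_def by (simp add: sum_distrib_right) (rule sum.swap)
    finally show ?thesis .
  qed
  have "(?P * E * (transpose_mat E * ?K * E)) $$ (d, M)
      = (\<Sum>j<M + 1. (?P * E) $$ (d, j) * (transpose_mat E * ?K * E) $$ (j, M))"
    using P E K by (intro index_mult_mat_sum[of _ "d + 1" "M + 1" _ "M + 1"]) auto
  also have "\<dots> = u * (\<Sum>j<M + 1. E $$ (d, j) * bilin_form d U (\<lambda>k. E $$ (k, j)) (\<lambda>k. E $$ (k, M)))"
    by (subst sum_distrib_left, intro sum.cong refl) (simp add: PE EKE del: sum.lessThan_Suc)
  finally show ?thesis
    unfolding lsa_def using P E K by simp
qed

lemma bilin_form_smult:
  "A \<in> carrier_mat d d \<Longrightarrow> bilin_form d (c \<cdot>\<^sub>m A) t u = c * bilin_form d A t u"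
  by (simp add: bilin_form_def sum_distrib_left mult_ac)

lemma inner_mult_mat_vec_eq_eig_comb:
  fixes a :: "real vec"
  assumes "Q \<in> carrier_mat d d" "a \<in> carrier_vec d"
  shows "(Q *\<^sub>v a) \<bullet> vec d x = eig_comb Q d (\<lambda>m. a $ m) x"
  using assms by (simp add: eig_comb_eq_lin_form lin_form_def scalar_prod_def lessThan_atLeast0 mult_ac)

definition error_coef :: "real mat \<Rightarrow> nat \<Rightarrow> nat \<Rightarrow> (nat \<Rightarrow> real) \<Rightarrow> (nat \<Rightarrow> real)
    \<Rightarrow> (nat \<Rightarrow> nat \<Rightarrow> real) \<Rightarrow> (nat \<Rightarrow> real) \<Rightarrow> nat \<Rightarrow> real" where
  "error_coef Q d M v a xs es m =
    1 / real M * (\<Sum>j<M. (eig_comb Q d a (xs j) + es j) * v m * eig_coord Q d m (xs j)) - a m"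

lemma lsa_prompt_error:
  fixes a :: "real vec"
  assumes Q: "Q \<in> carrier_mat d d" and c: "c \<noteq> 0" and a: "a \<in> carrier_vec d"
  shows "lsa d M (WPV_mat d (1 / c)) (WKQ_mat d (c \<cdot>\<^sub>m (Q * mat_diag d v * transpose_mat Q)))
      (prompt_mat d M (Q *\<^sub>v a) xs xq es) - (Q *\<^sub>v a) \<bullet> vec d xq
    = eig_comb Q d (error_coef Q d M v (\<lambda>m. a $ m) xs es) xq"
proof -
  let ?U = "c \<cdot>\<^sub>m (Q * mat_diag d v * transpose_mat Q)"
  let ?E = "prompt_mat d M (Q *\<^sub>v a) xs xq es"
  let ?a = "\<lambda>m. a $ m"
  let ?y = "\<lambda>j. eig_comb Q d ?a (xs j) + es j"
  have QVQ: "Q * mat_diag d v * transpose_mat Q \<in> carrier_mat d d"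
    using Q by (metis mult_carrier_mat mat_diag_dim transpose_carrier_mat)
  then have U: "?U \<in> carrier_mat d d"
    by simp
  have E: "?E \<in> carrier_mat (d + 1) (M + 1)"
    by (simp add: prompt_mat_def)
  have label: "?E $$ (d, j) = ?y j" if "j < M" for j
    using that inner_mult_mat_vec_eq_eig_comb[OF Q a] by (simp add: prompt_mat_def)
  have bilinear: "bilin_form d ?U (\<lambda>k. ?E $$ (k, j)) (\<lambda>k. ?E $$ (k, M))
      = c * (\<Sum>n<d. v n * eig_coord Q d n (xs j) * eig_coord Q d n xq)" if "j < M" for j
  proof -
    have "bilin_form d ?U (\<lambda>k. ?E $$ (k, j)) (\<lambda>k. ?E $$ (k, M)) = bilin_form d ?U (xs j) xq"
      using that by (simp add: bilin_form_def prompt_mat_def)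
    then show ?thesis
      by (simp add: bilin_form_smult[OF QVQ] bilin_form_conj_mat_diag[OF Q] mult_ac)
  qed
  have "(\<Sum>j<M. ?E $$ (d, j) * bilin_form d ?U (\<lambda>k. ?E $$ (k, j)) (\<lambda>k. ?E $$ (k, M)))
      = c * (\<Sum>j<M. ?y j * (\<Sum>n<d. v n * eig_coord Q d n (xs j) * eig_coord Q d n xq))"
    by (subst sum_distrib_left, intro sum.cong refl) (simp add: label bilinear)
  moreover have "?E $$ (d, M) = 0"
    by (simp add: prompt_mat_def)
  ultimately have "lsa d M (WPV_mat d (1 / c)) (WKQ_mat d ?U) ?E
      = 1 / real M * (\<Sum>j<M. ?y j * (\<Sum>n<d. v n * eig_coord Q d n (xs j) * eig_coord Q d n xq))"
    using c by (simp add: lsa_eq_bilin_form[OF E U])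
  also have "\<dots> = (\<Sum>n<d. 1 / real M * (\<Sum>j<M. ?y j * v n * eig_coord Q d n (xs j)) * eig_coord Q d n xq)"
    by (simp add: sum_distrib_left sum_distrib_right mult_ac) (rule sum.swap)
  finally show ?thesis
    unfolding inner_mult_mat_vec_eq_eig_comb[OF Q a] error_coef_def eig_comb_def
    by (simp add: left_diff_distrib sum_subtractf)
qed

section \<open>The risk\<close>

context eigen_gaussian_vec
begin

lemma error_coef_sq_noise_integral:
  assumes M: "0 < M"
  shows integrable_error_coef_sq_noise: "integrable (PiM {..<M} (\<lambda>_. normal_meas (\<sigma>\<^sup>2)))
      (\<lambda>es. (error_coef Q d M v a xs es m)\<^sup>2)"
    and integral_error_coef_sq_noise:
      "(\<integral>es. (error_coef Q d M v a xs es m)\<^sup>2 \<partial>PiM {..<M} (\<lambda>_. normal_meas (\<sigma>\<^sup>2)))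
      = (1 / real M * (\<Sum>j<M. eig_comb Q d a (xs j) * v m * eig_coord Q d m (xs j)) - a m)\<^sup>2
        + \<sigma>\<^sup>2 * (\<Sum>j<M. (v m * eig_coord Q d m (xs j) / real M)\<^sup>2)"
proof -
  have coef_sq: "(error_coef Q d M v a xs es m)\<^sup>2 = (1 / real M *
      (\<Sum>j<M. (eig_comb Q d a (xs j) + es j) * (v m * eig_coord Q d m (xs j))) - a m)\<^sup>2" for es
    by (simp add: error_coef_def mult.assoc)
  show "integrable (PiM {..<M} (\<lambda>_. normal_meas (\<sigma>\<^sup>2))) (\<lambda>es. (error_coef Q d M v a xs es m)\<^sup>2)"
    unfolding coef_sq by (rule integrable_noisy_average_sq[OF zero_le_power2 M])
  show "(\<integral>es. (error_coef Q d M v a xs es m)\<^sup>2 \<partial>PiM {..<M} (\<lambda>_. normal_meas (\<sigma>\<^sup>2)))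
      = (1 / real M * (\<Sum>j<M. eig_comb Q d a (xs j) * v m * eig_coord Q d m (xs j)) - a m)\<^sup>2
        + \<sigma>\<^sup>2 * (\<Sum>j<M. (v m * eig_coord Q d m (xs j) / real M)\<^sup>2)"
    unfolding coef_sq integral_noisy_average_sq[OF zero_le_power2 M] by (simp add: mult.assoc)
qed

lemma error_coef_sq_iterated_integral:
  assumes m: "m < d" and M: "0 < M"
  shows integrable_error_coef_sq: "integrable (PiM {..<M} (\<lambda>_. mu))
      (\<lambda>xs. \<integral>es. (error_coef Q d M v a xs es m)\<^sup>2 \<partial>PiM {..<M} (\<lambda>_. normal_meas (\<sigma>\<^sup>2)))"
    and integral_error_coef_sq:
      "(\<integral>xs. \<integral>es. (error_coef Q d M v a xs es m)\<^sup>2 \<partial>PiM {..<M} (\<lambda>_. normal_meas (\<sigma>\<^sup>2))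
        \<partial>PiM {..<M} (\<lambda>_. mu))
      = (v m * lam m - 1)\<^sup>2 * (a m)\<^sup>2
        + (v m)\<^sup>2 * lam m * (diag_form d lam a a + lam m * (a m)\<^sup>2 + \<sigma>\<^sup>2) / real M"
proof -
  note integrable = integrable_prompt_signal_sq[OF m M, of a "v m"] integrable_prompt_noise[OF m, of M "v m"]
  show "integrable (PiM {..<M} (\<lambda>_. mu))
      (\<lambda>xs. \<integral>es. (error_coef Q d M v a xs es m)\<^sup>2 \<partial>PiM {..<M} (\<lambda>_. normal_meas (\<sigma>\<^sup>2)))"
    unfolding integral_error_coef_sq_noise[OF M] using integrable by simp
  show "(\<integral>xs. \<integral>es. (error_coef Q d M v a xs es m)\<^sup>2 \<partial>PiM {..<M} (\<lambda>_. normal_meas (\<sigma>\<^sup>2))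
        \<partial>PiM {..<M} (\<lambda>_. mu))
      = (v m * lam m - 1)\<^sup>2 * (a m)\<^sup>2
        + (v m)\<^sup>2 * lam m * (diag_form d lam a a + lam m * (a m)\<^sup>2 + \<sigma>\<^sup>2) / real M"
  proof -
    have "(\<integral>xs. \<integral>es. (error_coef Q d M v a xs es m)\<^sup>2 \<partial>PiM {..<M} (\<lambda>_. normal_meas (\<sigma>\<^sup>2))
          \<partial>PiM {..<M} (\<lambda>_. mu))
        = (\<integral>xs. (1 / real M * (\<Sum>j<M. eig_comb Q d a (xs j) * v m * eig_coord Q d m (xs j)) - a m)\<^sup>2
            \<partial>PiM {..<M} (\<lambda>_. mu))
          + \<sigma>\<^sup>2 * (\<integral>xs. (\<Sum>j<M. (v m * eig_coord Q d m (xs j) / real M)\<^sup>2) \<partial>PiM {..<M} (\<lambda>_. mu))"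
      unfolding integral_error_coef_sq_noise[OF M] using integrable by simp
    also have "\<dots> = (v m * lam m - 1)\<^sup>2 * (a m)\<^sup>2
        + (v m)\<^sup>2 * lam m * (diag_form d lam a a + lam m * (a m)\<^sup>2 + \<sigma>\<^sup>2) / real M"
      unfolding integral_prompt_signal_sq[OF m M] integral_prompt_noise[OF m]
      using M by (simp add: field_simps)
    finally show ?thesis .
  qed
qed

lemma error_coef_risk:
  assumes M: "0 < M"
  shows "(\<integral>(xs, xq, es). (eig_comb Q d (error_coef Q d M v a xs es) xq)\<^sup>2
      \<partial>(PiM {..<M} (\<lambda>_. mu) \<Otimes>\<^sub>M mu \<Otimes>\<^sub>M PiM {..<M} (\<lambda>_. normal_meas (\<sigma>\<^sup>2))))
    = (\<Sum>m<d. lam m * ((v m * lam m - 1)\<^sup>2 * (a m)\<^sup>2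
        + (v m)\<^sup>2 * lam m * (diag_form d lam a a + lam m * (a m)\<^sup>2 + \<sigma>\<^sup>2) / real M))"
    (is "integral\<^sup>L (?P \<Otimes>\<^sub>M mu \<Otimes>\<^sub>M ?N) ?g = (\<Sum>m<d. lam m * ?risk m)")
proof -
  let ?coef_sq = "\<lambda>m xs. \<integral>es. (error_coef Q d M v a xs es m)\<^sup>2 \<partial>?N"
  have query: "(\<integral>xq. (eig_comb Q d (error_coef Q d M v a xs es) xq)\<^sup>2 \<partial>mu)
      = (\<Sum>m<d. lam m * (error_coef Q d M v a xs es m)\<^sup>2)" for xs es
    unfolding integral_eig_comb_sq diag_form_def by (simp add: power2_eq_square mult.assoc)
  have inner: "(\<integral>es. \<integral>xq. (eig_comb Q d (error_coef Q d M v a xs es) xq)\<^sup>2 \<partial>mu \<partial>?N)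
      = (\<Sum>m<d. lam m * ?coef_sq m xs)" for xs
    unfolding query using integrable_error_coef_sq_noise[OF M]
    by (simp add: Bochner_Integration.integral_sum)
  have "integral\<^sup>L (?P \<Otimes>\<^sub>M mu \<Otimes>\<^sub>M ?N) ?g = (\<integral>xs. \<integral>es. \<integral>xq. ?g (xs, xq, es) \<partial>mu \<partial>?N \<partial>?P)"
  proof (rule integral_triple_nonneg_iterated)
    show "sigma_finite_measure ?P" "sigma_finite_measure mu" "sigma_finite_measure ?N"
      by (auto intro!: prob_space_imp_sigma_finite prob_space_PiM prob_space_normal_meas
          prob_space_axioms)
    show "?g \<in> borel_measurable (?P \<Otimes>\<^sub>M mu \<Otimes>\<^sub>M ?N)"
      unfolding error_coef_def eig_comb_def by measurable
    show "0 \<le> ?g \<omega>" for \<omega>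
      by (simp add: case_prod_beta)
    show "integrable mu (\<lambda>xq. ?g (xs, xq, es))" for xs es
      using integrable_eig_comb_power[of _ 2] by simp
    show "integrable ?N (\<lambda>es. \<integral>xq. ?g (xs, xq, es) \<partial>mu)" for xs
      using integrable_error_coef_sq_noise[OF M] by (simp add: query)
    have "integrable ?P (\<lambda>xs. \<Sum>m<d. lam m * ?coef_sq m xs)"
    proof (rule Bochner_Integration.integrable_sum)
      show "integrable ?P (\<lambda>xs. lam m * ?coef_sq m xs)" if "m \<in> {..<d}" for m
        using integrable_error_coef_sq[of m] that M by simp
    qed
    then show "integrable ?P (\<lambda>xs. \<integral>es. \<integral>xq. ?g (xs, xq, es) \<partial>mu \<partial>?N)"
      by (simp add: inner)
  qed
  also have "\<dots> = (\<Sum>m<d. lam m * (\<integral>xs. ?coef_sq m xs \<partial>?P))"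
    using integrable_error_coef_sq[OF _ M] by (simp add: inner Bochner_Integration.integral_sum)
  also have "\<dots> = (\<Sum>m<d. lam m * ?risk m)"
    by (intro sum.cong refl) (simp add: integral_error_coef_sq[OF _ M])
  finally show ?thesis .
qed

lemma lsa_risk:
  fixes b :: "real vec"
  assumes "0 < M" "c \<noteq> 0" "b \<in> carrier_vec d"
  shows "(\<integral>(xs, xq, es). (lsa d M (WPV_mat d (1 / c)) (WKQ_mat d (c \<cdot>\<^sub>m (Q * mat_diag d v * transpose_mat Q)))
        (prompt_mat d M (Q *\<^sub>v b) xs xq es) - (Q *\<^sub>v b) \<bullet> vec d xq)\<^sup>2
      \<partial>(PiM {..<M} (\<lambda>_. mu) \<Otimes>\<^sub>M mu \<Otimes>\<^sub>M PiM {..<M} (\<lambda>_. normal_meas (\<sigma>\<^sup>2))))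
    = (\<Sum>m<d. lam m * ((v m * lam m - 1)\<^sup>2 * (b $ m)\<^sup>2 + (v m)\<^sup>2 * lam m *
        (diag_form d lam (\<lambda>m. b $ m) (\<lambda>m. b $ m) + lam m * (b $ m)\<^sup>2 + \<sigma>\<^sup>2) / real M))"
  using error_coef_risk[OF assms(1), where v=v and a="\<lambda>m. b $ m" and \<sigma>=\<sigma>]
  by (simp only: lsa_prompt_error[OF Q_carrier assms(2,3)])

end

lemma qnorm2_mat_diag:
  assumes "x \<in> carrier_vec d"
  shows "qnorm2 (mat_diag d f) x = (\<Sum>i<d. f i * (x $ i)\<^sup>2)"
proof -
  have entry: "(mat_diag d f *\<^sub>v x) $ i = f i * x $ i" if "i < d" for i
  proof -
    have "(mat_diag d f *\<^sub>v x) $ i = (\<Sum>j<d. (if i = j then f j else 0) * x $ j)"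
      using assms that by (simp add: mat_diag_def scalar_prod_def lessThan_atLeast0 row_def)
    also have "\<dots> = (\<Sum>j<d. if i = j then f j * x $ j else 0)"
      by (intro sum.cong refl) simp
    finally show ?thesis
      using that by simp
  qed
  have "dim_vec (mat_diag d f *\<^sub>v x) = d"
    by (simp add: mat_diag_def)
  then have "qnorm2 (mat_diag d f) x = (\<Sum>i<d. x $ i * (mat_diag d f *\<^sub>v x) $ i)"
    unfolding qnorm2_def scalar_prod_def lessThan_atLeast0 by simp
  also have "\<dots> = (\<Sum>i<d. f i * (x $ i)\<^sup>2)"
    by (intro sum.cong refl) (simp add: entry power2_eq_square)
  finally show ?thesis .
qed

lemma mat_tr_mat_diag: "mat_tr (mat_diag d f) = (\<Sum>i<d. f i)"
  by (simp add: mat_tr_def mat_diag_def)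

lemma risk_term_split:
  fixes lam v a s \<xi> :: real
  assumes "(a = s \<and> \<xi> = 0) \<or> (a = \<xi> \<and> s = 0 \<and> v = 0)"
  shows "lam * ((v * lam - 1)\<^sup>2 * a\<^sup>2 + v\<^sup>2 * lam * (A + lam * a\<^sup>2 + \<sigma>\<^sup>2) / real M)
    = 1 / real M * (v * v * lam * lam * lam * s\<^sup>2) + 1 / real M * (A + \<sigma>\<^sup>2) * (v * v * lam * lam)
      + lam * \<xi>\<^sup>2 + s\<^sup>2 * lam * (lam * v - 1)\<^sup>2"
  using assms by (auto simp: divide_inverse algebra_simps power2_eq_square)

lemma risk_split_eigenspaces:
  fixes s \<xi> :: "real vec"
  assumes r: "r \<le> d" and s: "s \<in> carrier_vec d" and \<xi>: "\<xi> \<in> carrier_vec d"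
    and s_support: "\<And>i. r \<le> i \<Longrightarrow> i < d \<Longrightarrow> s $ i = 0"
    and \<xi>_support: "\<And>i. i < r \<Longrightarrow> \<xi> $ i = 0"
    and v_support: "\<And>i. r \<le> i \<Longrightarrow> v i = 0"
  shows "(\<Sum>m<d. lam m * ((v m * lam m - 1)\<^sup>2 * ((s + \<xi>) $ m)\<^sup>2
      + (v m)\<^sup>2 * lam m * (A + lam m * ((s + \<xi>) $ m)\<^sup>2 + \<sigma>\<^sup>2) / real M))
    = 1 / real M * qnorm2 (mat_diag d v * mat_diag d v * mat_diag d lam * mat_diag d lam * mat_diag d lam) s
      + 1 / real M * (A + \<sigma>\<^sup>2) * mat_tr (mat_diag d v * mat_diag d v * mat_diag d lam * mat_diag d lam)
      + qnorm2 (mat_diag d lam) \<xi>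
      + (\<Sum>i<r. (s $ i)\<^sup>2 * lam i * (lam i * v i - 1)\<^sup>2)"
proof -
  have coords: "((s + \<xi>) $ m = s $ m \<and> \<xi> $ m = 0) \<or> ((s + \<xi>) $ m = \<xi> $ m \<and> s $ m = 0 \<and> v m = 0)"
    if "m < d" for m
    using that s \<xi> s_support \<xi>_support v_support by (cases "m < r") auto
  have tail: "(\<Sum>i<r. (s $ i)\<^sup>2 * lam i * (lam i * v i - 1)\<^sup>2)
      = (\<Sum>i<d. (s $ i)\<^sup>2 * lam i * (lam i * v i - 1)\<^sup>2)"
    by (rule sum.mono_neutral_left) (use r s_support in auto)
  have diag3: "mat_diag d v * mat_diag d v * mat_diag d lam * mat_diag d lam * mat_diag d lam
      = mat_diag d (\<lambda>i. v i * v i * lam i * lam i * lam i)"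
    and diag2: "mat_diag d v * mat_diag d v * mat_diag d lam * mat_diag d lam
      = mat_diag d (\<lambda>i. v i * v i * lam i * lam i)"
    by simp_all
  have "(\<Sum>m<d. lam m * ((v m * lam m - 1)\<^sup>2 * ((s + \<xi>) $ m)\<^sup>2
      + (v m)\<^sup>2 * lam m * (A + lam m * ((s + \<xi>) $ m)\<^sup>2 + \<sigma>\<^sup>2) / real M))
    = (\<Sum>m<d. 1 / real M * (v m * v m * lam m * lam m * lam m * (s $ m)\<^sup>2)
      + 1 / real M * (A + \<sigma>\<^sup>2) * (v m * v m * lam m * lam m) + lam m * (\<xi> $ m)\<^sup>2
      + (s $ m)\<^sup>2 * lam m * (lam m * v m - 1)\<^sup>2)"
    by (rule sum.cong[OF refl], rule risk_term_split, rule coords) simp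
  also have "\<dots> = 1 / real M * qnorm2 (mat_diag d v * mat_diag d v * mat_diag d lam * mat_diag d lam * mat_diag d lam) s
      + 1 / real M * (A + \<sigma>\<^sup>2) * mat_tr (mat_diag d v * mat_diag d v * mat_diag d lam * mat_diag d lam)
      + qnorm2 (mat_diag d lam) \<xi>
      + (\<Sum>i<r. (s $ i)\<^sup>2 * lam i * (lam i * v i - 1)\<^sup>2)"
    unfolding diag3 unfolding diag2 qnorm2_mat_diag[OF s] qnorm2_mat_diag[OF \<xi>] mat_tr_mat_diag tail
    by (simp only: sum.distrib sum_distrib_left)
  finally show ?thesis .
qed

theorem theorem4p3:
  fixes d N M r :: nat and \<sigma> c :: real and lam :: "nat \<Rightarrow> real"
    and Q Lam :: "real mat" and w s \<xi> :: "real vec"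
    and mu :: "(nat \<Rightarrow> real) measure" and nu :: "real measure"
  assumes "d \<ge> 1" "N \<ge> 1" "M \<ge> 1" "r \<le> d" "\<sigma> \<ge> 0" "c \<noteq> 0"
    and "Q \<in> carrier_mat d d" "transpose_mat Q * Q = 1\<^sub>m d" "Q * transpose_mat Q = 1\<^sub>m d"
    and "\<And>i j. i \<le> j \<Longrightarrow> j < d \<Longrightarrow> lam j \<le> lam i"
    and "\<And>i. i < d \<Longrightarrow> lam i \<ge> 0"
    and "Lam = Q * mat_diag d lam * transpose_mat Q"
    and "w \<in> carrier_vec d" "s \<in> carrier_vec d" "\<xi> \<in> carrier_vec d"
    and "w = Q *\<^sub>v (s + \<xi>)"
    and "\<And>i. r \<le> i \<Longrightarrow> i < d \<Longrightarrow> s $ i = 0"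
    and "\<And>i. i < r \<Longrightarrow> \<xi> $ i = 0"
    and "gaussian_vec d Lam mu"
    and "nu = normal_meas (\<sigma>\<^sup>2)"
  shows "(let Dm = mat_diag d lam;
              V = mat_diag d (vstar d N r lam);
              U = c \<cdot>\<^sub>m (Q * V * transpose_mat Q);
              f = lsa d M (WPV_mat d (1 / c)) (WKQ_mat d U)
          in integral\<^sup>L (PiM {..<M} (\<lambda>_. mu) \<Otimes>\<^sub>M mu \<Otimes>\<^sub>M PiM {..<M} (\<lambda>_. nu))
               (\<lambda>(xs, xq, es). (f (prompt_mat d M w xs xq es) - scalar_prod w (vec d xq))\<^sup>2)
           = 1 / real M * qnorm2 (V * V * Dm * Dm * Dm) s
             + 1 / real M * (qnorm2 Dm (s + \<xi>) + \<sigma>\<^sup>2) * mat_tr (V * V * Dm * Dm)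
             + qnorm2 Dm \<xi>
             + (\<Sum>i<r. (s $ i)\<^sup>2 * lam i * (lam i * vstar d N r lam i - 1)\<^sup>2))"
proof -
  interpret eigen_gaussian_vec d Q Lam lam mu
    using assms by unfold_locales auto
  have M: "0 < M" and a: "s + \<xi> \<in> carrier_vec d"
    using assms(3,14,15) by auto
  have diag: "diag_form d lam (\<lambda>m. (s + \<xi>) $ m) (\<lambda>m. (s + \<xi>) $ m) = qnorm2 (mat_diag d lam) (s + \<xi>)"
    using a by (simp add: qnorm2_mat_diag diag_form_def power2_eq_square mult.assoc)
  show ?thesis
    unfolding Let_def assms(16,20) lsa_risk[OF M assms(6) a] diag
    by (rule risk_split_eigenspaces) (use assms(4,14,15,17,18) in \<open>auto simp: vstar_def\<close>)
qed

end
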